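(* For every real number $L>0$, $$\mathcal L\left(e^{-L}\right)=\sum_{k=2}^{\infty}\mathcal L\left(\frac{\sinh^2(L/2)}{\sinh^2(kL/2)}\right).$$
   Context: $\mathcal L$ denotes the Rogers dilogarithm: for real $z\le 1$, $\mathcal L(z)=\mathrm{Li}_2(z)+\tfrac12\log|z|\log(1-z)$ (with $\mathcal L(0)=0$, $\mathcal L(1)=\pi^2/6$), where $\mathrm{Li}_2(z)=\sum_{m\ge1}z^m/m^2=-\int_0^z\frac{\log(1-t)}{t}\,dt$. *)

theory Defs
  imports "HOL-Analysis.Analysis"
begin

text \<open>Dilogarithm for real z \<le> 1: Li2 z = - integral from 0 to z of log(1-t)/t dt
  (oriented integral; the integrand at t = 0 is irrelevant, measure zero).\<close>
definition Li2 :: "real \<Rightarrow> real" where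
  "Li2 z = (if 0 \<le> z then - integral {0..z} (\<lambda>t. ln (1 - t) / t)
            else integral {z..0} (\<lambda>t. ln (1 - t) / t))"

definition Rogers_L :: "real \<Rightarrow> real" where
  "Rogers_L z = (if z = 0 then 0 else if z = 1 then pi\<^sup>2 / 6
                 else Li2 z + 1/2 * ln \<bar>z\<bar> * ln (1 - z))"

end

theory Submission
  imports Defs "HOL-Real_Asymp.Real_Asymp"
begin

text \<open>
  Put \<open>q = exp (-L)\<close>, \<open>x\<^sub>k = (1 - q) / (1 - q^(k+2))\<close> and \<open>y\<^sub>k = q^(k+1) x\<^sub>k\<close>, so that
  \<open>x\<^sub>k y\<^sub>k = sinh\<^sup>2(L/2) / sinh\<^sup>2((k+2)L/2)\<close>. Abel's five-term relation
  \<open>L x + L y = L (xy) + L (x(1-y)/(1-xy)) + L (y(1-x)/(1-xy))\<close> sends \<open>(x\<^sub>k, y\<^sub>k)\<close> to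
  \<open>(x\<^sub>k\<^sub>+\<^sub>1, y\<^sub>k\<^sub>+\<^sub>1)\<close> and splits off \<open>L (x\<^sub>k y\<^sub>k)\<close>, so the series telescopes to
  \<open>L x\<^sub>0 + L y\<^sub>0 - L (1 - q)\<close>, because \<open>x\<^sub>k \<rightarrow> 1 - q\<close> and \<open>y\<^sub>k \<rightarrow> 0\<close>. Since \<open>x\<^sub>0 + y\<^sub>0 = 1\<close>,
  the reflection formula turns \<open>L x\<^sub>0 + L y\<^sub>0\<close> into \<open>L q + L (1 - q)\<close>. Both functional
  equations follow by differentiating in one variable and letting it tend to \<open>0\<close>; the
  value \<open>pi\<^sup>2/6\<close> of the reflection constant is never needed.
\<close>

definition dilog_kernel :: "real \<Rightarrow> real" where
  "dilog_kernel t = (if t = 0 then -1 else ln (1 - t) / t)"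

definition rogers :: "real \<Rightarrow> real" where
  "rogers x = - integral {0..x} dilog_kernel + ln x * ln (1 - x) / 2"

definition rogers_deriv :: "real \<Rightarrow> real" where
  "rogers_deriv x = - (ln (1 - x) / x + ln x / (1 - x)) / 2"

lemma tendsto_ln_one_minus_div: "((\<lambda>t::real. ln (1 - t) / t) \<longlongrightarrow> -1) (at 0)"
  unfolding filterlim_at_split by (intro conjI; real_asymp)

lemma continuous_on_dilog_kernel: "continuous_on {..<1} dilog_kernel"
proof -
  have "isCont dilog_kernel t" if "t < 1" for t
  proof (cases "t = 0")
    case True
    have "(dilog_kernel \<longlongrightarrow> -1) (at 0)"
      using tendsto_ln_one_minus_div
      by (rule Lim_transform_eventually) (auto simp: dilog_kernel_def eventually_at_filter)
    then show ?thesis using True by (simp add: isCont_def dilog_kernel_def)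
  next
    case False
    have near_t: "eventually (\<lambda>s. ln (1 - s) / s = dilog_kernel s) (nhds t)"
      using eventually_nhds_in_open[of "-{0}" t] False
      by (auto elim!: eventually_mono simp: dilog_kernel_def)
    have "isCont (\<lambda>s. ln (1 - s) / s) t"
      using that False by (intro continuous_intros) auto
    then show ?thesis using isCont_cong[OF near_t] by simp
  qed
  then show ?thesis by (simp add: continuous_at_imp_continuous_on)
qed

lemma Rogers_L_eq_rogers:
  assumes "0 < x" "x < 1"
  shows "Rogers_L x = rogers x"
proof -
  have "integral {0..x} (\<lambda>t. ln (1 - t) / t) = integral {0..x} dilog_kernel"
    by (rule integral_spike[of "{0}"]) (auto simp: dilog_kernel_def)
  then show ?thesis using assms by (simp add: Rogers_L_def Li2_def rogers_def)
qed

lemma has_real_derivative_integral_dilog_kernel: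
  assumes "0 < x" "x < 1"
  shows "((\<lambda>u. integral {0..u} dilog_kernel) has_real_derivative dilog_kernel x) (at x)"
proof -
  define b where "b = (1 + x) / 2"
  have b: "x < b" "b < 1" using assms by (auto simp: b_def)
  have "continuous_on {0..b} dilog_kernel"
    using b by (auto intro: continuous_on_subset[OF continuous_on_dilog_kernel])
  then have "((\<lambda>u. integral {0..u} dilog_kernel) has_real_derivative dilog_kernel x)
               (at x within {0<..<b})"
    using assms b by (intro DERIV_subset[OF integral_has_real_derivative]) auto
  moreover have "at x within {0<..<b} = at x"
    using assms b by (intro at_within_open) auto
  ultimately show ?thesis by simp
qed

lemma rogers_has_real_derivative:
  assumes "0 < x" "x < 1"
  shows "(rogers has_real_derivative rogers_deriv x) (at x)"
  unfolding rogers_def[abs_def] using assms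
  by (auto intro!: derivative_eq_intros has_real_derivative_integral_dilog_kernel
           simp: rogers_deriv_def dilog_kernel_def field_simps)

lemma rogers_has_real_derivative_chain:
  assumes "(h has_real_derivative h') (at x)" "0 < h x" "h x < 1"
  shows "((\<lambda>x. rogers (h x)) has_real_derivative rogers_deriv (h x) * h') (at x)"
  by (rule DERIV_chain2[OF rogers_has_real_derivative[OF assms(2,3)] assms(1)])

lemma isCont_rogers: "0 < x \<Longrightarrow> x < 1 \<Longrightarrow> isCont rogers x"
  using rogers_has_real_derivative DERIV_isCont by blast

lemma rogers_tendsto_0: "(rogers \<longlongrightarrow> 0) (at_right 0)"
proof -
  have "continuous_on {0..1/2} (\<lambda>u. integral {0..u} dilog_kernel)"
    by (intro indefinite_integral_continuous_1 integrable_continuous_real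
          continuous_on_subset[OF continuous_on_dilog_kernel]) auto
  then have "((\<lambda>u. integral {0..u} dilog_kernel) \<longlongrightarrow> integral {0..0} dilog_kernel)
               (at 0 within {0..1/2})"
    unfolding continuous_on_def by (rule bspec) simp
  then have "((\<lambda>u. integral {0..u} dilog_kernel) \<longlongrightarrow> 0) (at_right 0)"
    by (simp add: at_within_Icc_at_right)
  moreover have "((\<lambda>x::real. ln x * ln (1 - x)) \<longlongrightarrow> 0) (at_right 0)"
    by real_asymp
  ultimately have "((\<lambda>x. - integral {0..x} dilog_kernel + ln x * ln (1 - x) / 2) \<longlongrightarrow> - 0 + 0 / 2)
                      (at_right 0)"
    by (intro tendsto_intros) auto
  then show ?thesis by (simp add: rogers_def[abs_def])
qed

lemma rogers_tendsto_0_comp: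
  assumes "(h \<longlongrightarrow> 0) F" "eventually (\<lambda>x. 0 < h x) F"
  shows "((\<lambda>x. rogers (h x)) \<longlongrightarrow> 0) F"
  using filterlim_compose[OF rogers_tendsto_0 tendsto_imp_filterlim_at_right[OF assms]] by simp

lemma rogers_reflection: "\<exists>C. \<forall>x\<in>{0<..<1}. rogers x + rogers (1 - x) = C"
proof (rule has_field_derivative_zero_constant)
  fix x :: real
  assume "x \<in> {0<..<1}"
  then have x: "0 < x" "x < 1" by auto
  have "((\<lambda>x. 1 - x) has_real_derivative -1) (at x)"
    by (auto intro!: derivative_eq_intros)
  from rogers_has_real_derivative_chain[OF this]
  have "((\<lambda>x. rogers (1 - x)) has_real_derivative rogers_deriv (1 - x) * -1) (at x)"
    using x by simp
  moreover have "rogers_deriv x + rogers_deriv (1 - x) * -1 = 0"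
    by (simp add: rogers_deriv_def)
  ultimately have "((\<lambda>x. rogers x + rogers (1 - x)) has_real_derivative 0) (at x)"
    using DERIV_add[OF rogers_has_real_derivative[OF x]] DERIV_cong by blast
  then show "((\<lambda>x. rogers x + rogers (1 - x)) has_real_derivative 0) (at x within {0<..<1})"
    by (rule has_field_derivative_at_within)
qed simp

text \<open>Here \<open>a, b, c, d, e\<close> stand for \<open>ln x, ln y, ln (1-x), ln (1-y), ln (1-xy)\<close>; keeping
  \<open>p, q, s\<close> abstract stops \<open>field_simps\<close> from multiplying out the denominators.\<close>

lemma five_term_rational_identity:
  fixes x y p q s a b c d e :: real
  assumes "x \<noteq> 0" "y \<noteq> 0" "p \<noteq> 0" "q \<noteq> 0" "s \<noteq> 0"
    and "p = 1 - x" "q = 1 - y" "s = 1 - x*y"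
  shows "- (c/x + a/p) / 2 - (- (e/(x*y) + (a+b)/s) / 2) * y
     - (- ((c-e)/(x*q/s) + (a+d-e)/(p/s)) / 2) * (q/s^2)
     - (- ((d-e)/(y*p/s) + (b+c-e)/(q/s)) / 2) * (- y*q/s^2)
     = 0"
  using assms(1-5) by (simp add: field_simps power2_eq_square) (unfold assms(6-8), algebra)

lemma five_term_arguments_bounds:
  fixes x y :: real
  assumes "0 < x" "x < 1" "0 < y" "y < 1"
  shows "0 < x*y" "x*y < 1" "0 < x*(1-y)/(1-x*y)" "x*(1-y)/(1-x*y) < 1"
        "0 < y*(1-x)/(1-x*y)" "y*(1-x)/(1-x*y) < 1"
proof -
  have "x*y < 1" using assms mult_strict_mono[of x 1 y 1] by simp
  then show "0 < x*y" "x*y < 1" "0 < x*(1-y)/(1-x*y)" "0 < y*(1-x)/(1-x*y)"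
      "x*(1-y)/(1-x*y) < 1" "y*(1-x)/(1-x*y) < 1"
    using assms by (simp_all add: divide_less_eq algebra_simps)
qed

lemma rogers_deriv_five_term:
  fixes x y :: real
  assumes x: "0 < x" "x < 1" and y: "0 < y" "y < 1"
  shows "rogers_deriv x - rogers_deriv (x*y) * y
           - rogers_deriv (x*(1-y)/(1-x*y)) * ((1-y)/(1-x*y)^2)
           - rogers_deriv (y*(1-x)/(1-x*y)) * (- y*(1-y)/(1-x*y)^2) = 0"
proof -
  have "x*y < 1" using five_term_arguments_bounds[OF x y] by simp
  then have pos: "0 < 1 - x" "0 < 1 - y" "0 < 1 - x*y" using x y by auto
  have one_minus: "1 - x*(1-y)/(1-x*y) = (1-x)/(1-x*y)" "1 - y*(1-x)/(1-x*y) = (1-y)/(1-x*y)"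
    using pos by (simp_all add: field_simps)
  have logs: "ln ((1-x)/(1-x*y)) = ln (1-x) - ln (1-x*y)"
      "ln ((1-y)/(1-x*y)) = ln (1-y) - ln (1-x*y)"
      "ln (x*(1-y)/(1-x*y)) = ln x + ln (1-y) - ln (1-x*y)"
      "ln (y*(1-x)/(1-x*y)) = ln y + ln (1-x) - ln (1-x*y)"
      "ln (x*y) = ln x + ln y"
    using pos x y by (simp_all add: ln_div ln_mult)
  show ?thesis
    unfolding rogers_deriv_def one_minus logs
    by (rule five_term_rational_identity) (use x y pos in auto)
qed

lemma DERIV_zero_imp_eq_tendsto_at_right:
  fixes f :: "real \<Rightarrow> real"
  assumes deriv: "\<And>t. a < t \<Longrightarrow> t < b \<Longrightarrow> (f has_real_derivative 0) (at t)"
    and lim: "(f \<longlongrightarrow> l) (at_right a)" and x: "a < x" "x < b"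
  shows "f x = l"
proof -
  have "\<exists>c. \<forall>t\<in>{a<..<b}. f t = c"
  proof (rule has_field_derivative_zero_constant)
    fix t
    assume "t \<in> {a<..<b}"
    then show "(f has_real_derivative 0) (at t within {a<..<b})"
      using deriv by (simp add: has_field_derivative_at_within)
  qed simp
  then obtain c where c: "\<And>t. t \<in> {a<..<b} \<Longrightarrow> f t = c" by blast
  have "eventually (\<lambda>t. t \<in> {a<..<b}) (at_right a)"
    using x by (intro eventually_at_right_real) simp
  then have "eventually (\<lambda>t. f t = c) (at_right a)"
    by (rule eventually_mono) (rule c)
  then have "(f \<longlongrightarrow> c) (at_right a)"
    by (rule tendsto_eventually)
  then have "l = c"
    using lim tendsto_unique[OF trivial_limit_at_right_real] by blast
  then show ?thesis using c x by simp
qed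

lemma rogers_five_term_has_real_derivative_0:
  fixes x y :: real
  assumes x: "0 < x" "x < 1" and y: "0 < y" "y < 1"
  shows "((\<lambda>x. rogers x + rogers y - rogers (x*y) - rogers (x*(1-y)/(1-x*y))
            - rogers (y*(1-x)/(1-x*y))) has_real_derivative 0) (at x)"
proof -
  note bounds = five_term_arguments_bounds[OF x y]
  have "1 - x*y \<noteq> 0" using bounds by simp
  then have "((\<lambda>x. x*y) has_real_derivative y) (at x)"
      and "((\<lambda>x. x*(1-y)/(1-x*y)) has_real_derivative (1-y)/(1-x*y)^2) (at x)"
      and "((\<lambda>x. y*(1-x)/(1-x*y)) has_real_derivative - y*(1-y)/(1-x*y)^2) (at x)"
    by (auto intro!: derivative_eq_intros simp: field_simps power2_eq_square)
  from this[THEN rogers_has_real_derivative_chain]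
  have "((\<lambda>x. rogers x + rogers y - rogers (x*y) - rogers (x*(1-y)/(1-x*y))
            - rogers (y*(1-x)/(1-x*y))) has_real_derivative
          rogers_deriv x + 0 - rogers_deriv (x*y) * y
            - rogers_deriv (x*(1-y)/(1-x*y)) * ((1-y)/(1-x*y)^2)
            - rogers_deriv (y*(1-x)/(1-x*y)) * (- y*(1-y)/(1-x*y)^2)) (at x)"
    using bounds by (intro DERIV_diff DERIV_add rogers_has_real_derivative[OF x] DERIV_const) auto
  moreover have "rogers_deriv x + 0 - rogers_deriv (x*y) * y
            - rogers_deriv (x*(1-y)/(1-x*y)) * ((1-y)/(1-x*y)^2)
            - rogers_deriv (y*(1-x)/(1-x*y)) * (- y*(1-y)/(1-x*y)^2) = 0"
    using rogers_deriv_five_term[OF x y] by (simp only: add_0_right)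
  ultimately show ?thesis by (rule DERIV_cong)
qed

lemma rogers_five_term:
  fixes x y :: real
  assumes x: "0 < x" "x < 1" and y: "0 < y" "y < 1"
  shows "rogers x + rogers y = rogers (x*y) + rogers (x*(1-y)/(1-x*y)) + rogers (y*(1-x)/(1-x*y))"
proof -
  have near_0: "eventually (\<lambda>x. 0 < x*y \<and> 0 < x*(1-y)/(1-x*y)) (at_right 0)"
    using eventually_at_right_real[of 0 1] five_term_arguments_bounds y
    by (auto elim: eventually_mono)
  have "((\<lambda>x. rogers (x*y)) \<longlongrightarrow> 0) (at_right 0)"
    by (rule rogers_tendsto_0_comp) (use near_0 in \<open>auto intro!: tendsto_eq_intros elim: eventually_mono\<close>)
  moreover have "((\<lambda>x. rogers (x*(1-y)/(1-x*y))) \<longlongrightarrow> 0) (at_right 0)"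
    by (rule rogers_tendsto_0_comp) (use near_0 in \<open>auto intro!: tendsto_eq_intros elim: eventually_mono\<close>)
  moreover have "((\<lambda>x. rogers (y*(1-x)/(1-x*y))) \<longlongrightarrow> rogers y) (at_right 0)"
    by (rule isCont_tendsto_compose[OF isCont_rogers[OF y]]) (auto intro!: tendsto_eq_intros)
  ultimately have "((\<lambda>x. rogers x + rogers y - rogers (x*y) - rogers (x*(1-y)/(1-x*y))
                      - rogers (y*(1-x)/(1-x*y))) \<longlongrightarrow> 0 + rogers y - 0 - 0 - rogers y) (at_right 0)"
    by (intro tendsto_diff tendsto_add rogers_tendsto_0 tendsto_const)
  with rogers_five_term_has_real_derivative_0[OF _ _ y] x
  have "rogers x + rogers y - rogers (x*y) - rogers (x*(1-y)/(1-x*y))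
          - rogers (y*(1-x)/(1-x*y)) = 0 + rogers y - 0 - 0 - rogers y"
    by (intro DERIV_zero_imp_eq_tendsto_at_right[where a = 0 and b = 1]) auto
  then show ?thesis by simp
qed

lemma five_term_orbit_step:
  fixes a A :: real
  assumes "0 < a" "a < 1" "0 < A" "A < 1"
  defines "x \<equiv> (1-a)/(1-a*A)" and "y \<equiv> A*(1-a)/(1-a*A)"
  shows "x*(1-y)/(1-x*y) = (1-a)/(1-a*(a*A))" "y*(1-x)/(1-x*y) = (a*A)*(1-a)/(1-a*(a*A))"
proof -
  define d p q where "d = 1 - a*A" and "p = 1 - A" and "q = 1 - a*(a*A)"
  have aA: "a*A < 1" using assms(1-4) mult_strict_mono[of a 1 A 1] by simp
  then have "a*(a*A) < 1" using assms(1-3) mult_strict_mono[of a 1 "a*A" 1] by simp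
  then have nz: "d \<noteq> 0" "p \<noteq> 0" "q \<noteq> 0" using aA assms(4) by (auto simp: d_def p_def q_def)
  have xy: "x = (1-a)/d" "y = A*(1-a)/d" by (simp_all add: x_def y_def d_def)
  have one_minus: "1 - y = p/d" "1 - x = a*p/d"
    using nz unfolding xy by (simp_all add: field_simps d_def p_def)
  have "1 - x*y = (d^2 - A*(1-a)^2)/d^2"
    using nz unfolding xy by (simp add: field_simps power2_eq_square)
  also have "d^2 - A*(1-a)^2 = p*q"
    unfolding d_def p_def q_def by algebra
  finally have "1 - x*y = p*q/d^2" .
  then have "x*(1-y)/(1-x*y) = (1-a)/q" "y*(1-x)/(1-x*y) = (a*A)*(1-a)/q"
    using nz unfolding one_minus by (simp_all add: xy field_simps power2_eq_square)
  then show "x*(1-y)/(1-x*y) = (1-a)/(1-a*(a*A))" "y*(1-x)/(1-x*y) = (a*A)*(1-a)/(1-a*(a*A))"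
    by (simp_all add: q_def)
qed

definition orbit_x :: "real \<Rightarrow> nat \<Rightarrow> real" where
  "orbit_x a k = (1 - a) / (1 - a^(k+2))"

definition orbit_y :: "real \<Rightarrow> nat \<Rightarrow> real" where
  "orbit_y a k = a^(k+1) * (1 - a) / (1 - a^(k+2))"

lemma orbit_bounds:
  assumes "0 < a" "a < 1"
  shows "0 < orbit_x a k" "orbit_x a k < 1" "0 < orbit_y a k" "orbit_y a k < 1"
proof -
  define A where "A = a^(k+1)"
  have A: "0 < A" "A < 1" using assms power_Suc_less_one[of a k] by (simp_all add: A_def)
  have "a^(k+2) = a*A" by (simp add: A_def)
  moreover have "a*A < a" "0 < 1 - a*A" using assms A mult_strict_mono[of a 1 A 1] by auto
  ultimately show "0 < orbit_x a k" "orbit_x a k < 1" "0 < orbit_y a k" "orbit_y a k < 1"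
    using assms A unfolding orbit_x_def orbit_y_def A_def[symmetric]
    by (simp_all add: divide_less_eq algebra_simps)
qed

lemma orbit_Suc:
  assumes "0 < a" "a < 1"
  shows "orbit_x a k * (1 - orbit_y a k) / (1 - orbit_x a k * orbit_y a k) = orbit_x a (Suc k)"
    and "orbit_y a k * (1 - orbit_x a k) / (1 - orbit_x a k * orbit_y a k) = orbit_y a (Suc k)"
proof -
  define A where "A = a^(k+1)"
  have A: "0 < A" "A < 1" using assms power_Suc_less_one[of a k] by (simp_all add: A_def)
  have powers: "a^(k+2) = a*A" "a^(Suc k+1) = a*A" "a^(Suc k+2) = a*(a*A)"
    by (simp_all add: A_def)
  show "orbit_x a k * (1 - orbit_y a k) / (1 - orbit_x a k * orbit_y a k) = orbit_x a (Suc k)"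
       "orbit_y a k * (1 - orbit_x a k) / (1 - orbit_x a k * orbit_y a k) = orbit_y a (Suc k)"
    using five_term_orbit_step[OF assms A]
    unfolding orbit_x_def orbit_y_def powers A_def[symmetric] by (simp_all add: mult.assoc)
qed

lemma orbit_y_0:
  assumes "0 < a" "a < 1"
  shows "orbit_y a 0 = 1 - orbit_x a 0"
proof -
  have "1 - a^2 \<noteq> 0" using assms power_Suc_less_one[of a 1] by (simp add: power2_eq_square)
  have "orbit_x a 0 + orbit_y a 0 = ((1 - a) + a * (1 - a)) / (1 - a^2)"
    by (simp add: orbit_x_def orbit_y_def add_divide_distrib power2_eq_square)
  also have "\<dots> = (1 - a^2) / (1 - a^2)"
    by (simp add: power2_eq_square algebra_simps)
  finally show ?thesis using \<open>1 - a^2 \<noteq> 0\<close> by simp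
qed

lemma orbit_x_tendsto: "0 < a \<Longrightarrow> a < 1 \<Longrightarrow> orbit_x a \<longlonglongrightarrow> 1 - a"
proof -
  assume "0 < a" "a < 1"
  then have "(\<lambda>k. a^(k+2)) \<longlonglongrightarrow> 0"
    by (intro LIMSEQ_ignore_initial_segment LIMSEQ_power_zero) simp
  then have "(\<lambda>k. (1 - a) / (1 - a^(k+2))) \<longlonglongrightarrow> (1 - a) / (1 - 0)"
    by (intro tendsto_intros) auto
  then show ?thesis by (simp add: orbit_x_def[abs_def])
qed

lemma orbit_y_tendsto: "0 < a \<Longrightarrow> a < 1 \<Longrightarrow> orbit_y a \<longlonglongrightarrow> 0"
proof -
  assume "0 < a" "a < 1"
  then have "(\<lambda>k. a^(k+1)) \<longlonglongrightarrow> 0" "(\<lambda>k. a^(k+2)) \<longlonglongrightarrow> 0"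
    by (intro LIMSEQ_ignore_initial_segment LIMSEQ_power_zero; simp)+
  then have "(\<lambda>k. a^(k+1) * (1 - a) / (1 - a^(k+2))) \<longlonglongrightarrow> 0 * (1 - a) / (1 - 0)"
    by (intro tendsto_intros) auto
  then show ?thesis by (simp add: orbit_y_def[abs_def])
qed

lemma orbit_x_mult_orbit_y:
  assumes "0 < a" "a < 1"
  shows "orbit_x a k * orbit_y a k = ((1 - a)^2 / (4*a)) / ((1 - a^(k+2))^2 / (4*a^(k+2)))"
proof -
  define d where "d = 1 - a^(k+2)"
  have "d \<noteq> 0" using orbit_bounds(1)[OF assms, of k] by (auto simp: orbit_x_def d_def)
  moreover have "a^(k+2) = a * a^(k+1)" by simp
  ultimately show ?thesis
    using assms unfolding orbit_x_def orbit_y_def d_def[symmetric]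
    by (simp add: field_simps power2_eq_square)
qed

lemma rogers_orbit_sums:
  assumes "0 < a" "a < 1"
  shows "(\<lambda>k. rogers (orbit_x a k * orbit_y a k)) sums rogers a"
proof -
  define f where "f k = rogers (orbit_x a k) + rogers (orbit_y a k)" for k
  note bounds = orbit_bounds[OF assms]
  have "rogers (orbit_x a k * orbit_y a k) = f k - f (Suc k)" for k
    using rogers_five_term[OF bounds[of k]] by (simp add: f_def orbit_Suc[OF assms])
  moreover have "f \<longlonglongrightarrow> rogers (1 - a) + 0"
    unfolding f_def[abs_def] using assms
    by (intro tendsto_add isCont_tendsto_compose[OF isCont_rogers] orbit_x_tendsto
          rogers_tendsto_0_comp orbit_y_tendsto always_eventually) (auto intro: bounds)
  ultimately have "(\<lambda>k. rogers (orbit_x a k * orbit_y a k)) sums (f 0 - rogers (1 - a))"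
    using telescope_sums' by fastforce
  moreover obtain C where C: "\<And>x. x \<in> {0<..<1} \<Longrightarrow> rogers x + rogers (1 - x) = C"
    using rogers_reflection by blast
  then have "f 0 = rogers (1 - a) + rogers a"
    using bounds[of 0] assms C[of "1 - a"] by (simp add: f_def orbit_y_0[OF assms])
  ultimately show ?thesis by simp
qed

lemma sinh_half_sq: "(sinh (x/2))\<^sup>2 = (1 - exp (-x))\<^sup>2 / (4 * exp (-x :: real))"
proof -
  have "exp (x/2) * exp (x/2) = exp x" "exp (-(x/2)) * exp (-(x/2)) = exp (-x)"
       "exp (x/2) * exp (-(x/2)) = 1" "exp (-x) * exp x = 1"
    by (simp_all flip: exp_add)
  then show ?thesis
    unfolding sinh_def by (simp add: field_simps power2_eq_square)
qed

theorem theorem1: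
  fixes L :: real
  assumes "L > 0"
  shows "(\<lambda>k. Rogers_L ((sinh (L/2))\<^sup>2 / (sinh (real (k + 2) * L / 2))\<^sup>2))
           sums Rogers_L (exp (-L))"
proof -
  define a where "a = exp (-L)"
  have a: "0 < a" "a < 1" using assms by (auto simp: a_def)
  have "exp (- (real (k + 2) * L)) = a^(k+2)" for k
    using exp_of_nat_mult[of "k + 2" "-L"] unfolding a_def by (simp only: mult_minus_right)
  then have "(sinh (L/2))\<^sup>2 / (sinh (real (k + 2) * L / 2))\<^sup>2 = orbit_x a k * orbit_y a k" for k
    by (simp only: sinh_half_sq a_def[symmetric] orbit_x_mult_orbit_y[OF a])
  moreover have "Rogers_L (orbit_x a k * orbit_y a k) = rogers (orbit_x a k * orbit_y a k)" for k
    using five_term_arguments_bounds(1,2)[OF orbit_bounds[OF a, of k]] by (rule Rogers_L_eq_rogers)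
  ultimately show ?thesis
    using rogers_orbit_sums[OF a] Rogers_L_eq_rogers[OF a] by (simp add: a_def)
qed

end
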